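(* Let $(\Omega,\mathcal{F},P_0)$ be a complete probability space, $\epsilon\in(0,1)$, $\mathcal{C}\subseteq\mathcal{F}$ a sub-$\sigma$-algebra, and $\rho:L^{2+\epsilon}_{\mathcal{F}}(\Omega,P_0)\to\mathbb{R}$ a sublinear operator with representation set $\mathcal{P}$. Suppose $\rho$ is stable and proper. Then for any $P\in\mathcal{P}$ and any integrable random variable $\xi$ (so that the expectations below are well defined), there exists $\bar P\in\mathcal{P}$ such that $$E_{\bar P}[\xi]=E_{P_0}\big[E_P[\xi\mid\mathcal{C}]\big].$$
   Context: A sublinear operator is a map $\rho:L^{2+\epsilon}_{\mathcal{F}}(\Omega,P_0)\to\mathbb{R}$ that is monotone ($\xi_1\ge\xi_2\Rightarrow\rho(\xi_1)\ge\rho(\xi_2)$), constant preserving ($\rho(c)=c$), sub-additive ($\rho(\xi_1+\xi_2)\le\rho(\xi_1)+\rho(\xi_2)$) and positively homogeneous ($\rho(\lambda\xi)=\lambda\rho(\xi)$ for $\lambda\ge0$). Its representation set $\mathcal{P}$ is the family of all linear expectations (identified with probability measures $P$) dominated by $\rho$, so that $\rho(\xi)=\max_{P\in\mathcal{P}}E_P[\xi]$. For $P\in\mathcal{P}$ write $f^P=\frac{dP}{dP_0}$ and $\mathcal{D}=\{f^P:P\in\mathcal{P}\}$. $\rho$ is proper if every $P\in\mathcal{P}$ is equivalent to $P_0$. $\rho$ (equivalently $\mathcal{P}$) is stable if for each $P\in\mathcal{P}$, with $f^P_{\mathcal{C}}:=E_{P_0}[f^P\mid\mathcal{C}]$, the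 random variable $f^P/f^P_{\mathcal{C}}$ lies in $\mathcal{D}$. Standing assumption: $\mathcal{D}$ is norm-bounded in $L^{1+\frac{2}{\epsilon}}_{\mathcal{F}}(P_0)$ and compact for the weak topology $\sigma(L^{1+\frac{2}{\epsilon}}(P_0),L^{1+\frac{\epsilon}{2}}(P_0))$. *)

theory Defs
  imports "HOL-Probability.Probability"
begin

definition Lp_set :: "'a measure \<Rightarrow> real \<Rightarrow> ('a \<Rightarrow> real) set" where
  "Lp_set M p = {\<xi> \<in> borel_measurable M. integrable M (\<lambda>x. \<bar>\<xi> x\<bar> powr p)}"

text \<open>Sublinear operator on \<open>L^p(M)\<close>; inequalities between random variables are meant
  almost surely (elements of \<open>L^p\<close> are equivalence classes).\<close>
definition sublinear_operator :: "'a measure \<Rightarrow> real \<Rightarrow> (('a \<Rightarrow> real) \<Rightarrow> real) \<Rightarrow> bool" where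
  "sublinear_operator M p \<rho> \<longleftrightarrow>
     (\<forall>\<xi>1\<in>Lp_set M p. \<forall>\<xi>2\<in>Lp_set M p. (AE x in M. \<xi>1 x \<ge> \<xi>2 x) \<longrightarrow> \<rho> \<xi>1 \<ge> \<rho> \<xi>2) \<and>
     (\<forall>c. \<rho> (\<lambda>_. c) = c) \<and>
     (\<forall>\<xi>1\<in>Lp_set M p. \<forall>\<xi>2\<in>Lp_set M p. \<rho> (\<lambda>x. \<xi>1 x + \<xi>2 x) \<le> \<rho> \<xi>1 + \<rho> \<xi>2) \<and>
     (\<forall>\<xi>\<in>Lp_set M p. \<forall>l::real. l \<ge> 0 \<longrightarrow> \<rho> (\<lambda>x. l * \<xi> x) = l * \<rho> \<xi>)"

definition rep_set :: "'a measure \<Rightarrow> real \<Rightarrow> (('a \<Rightarrow> real) \<Rightarrow> real) \<Rightarrow> 'a measure set" where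
  "rep_set M p \<rho> = {P. prob_space P \<and> sets P = sets M \<and> absolutely_continuous M P \<and>
     (\<forall>\<xi>\<in>Lp_set M p. integrable P \<xi> \<and> integral\<^sup>L P \<xi> \<le> \<rho> \<xi>)}"

definition density_of :: "'a measure \<Rightarrow> 'a measure \<Rightarrow> 'a \<Rightarrow> real" where
  "density_of M P = (\<lambda>x. enn2real (RN_deriv M P x))"

definition dens_set :: "'a measure \<Rightarrow> real \<Rightarrow> (('a \<Rightarrow> real) \<Rightarrow> real) \<Rightarrow> ('a \<Rightarrow> real) set" where
  "dens_set M p \<rho> = density_of M ` rep_set M p \<rho>"

definition proper_op :: "'a measure \<Rightarrow> real \<Rightarrow> (('a \<Rightarrow> real) \<Rightarrow> real) \<Rightarrow> bool" where
  "proper_op M p \<rho> \<longleftrightarrow>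
     (\<forall>P\<in>rep_set M p \<rho>. absolutely_continuous M P \<and> absolutely_continuous P M)"

definition stable_op :: "'a measure \<Rightarrow> 'a measure \<Rightarrow> real \<Rightarrow> (('a \<Rightarrow> real) \<Rightarrow> real) \<Rightarrow> bool" where
  "stable_op M C p \<rho> \<longleftrightarrow>
     (\<forall>P\<in>rep_set M p \<rho>. \<exists>g\<in>dens_set M p \<rho>.
        AE x in M. g x = density_of M P x / real_cond_exp M C (density_of M P) x)"

definition weak_topology_Lp :: "'a measure \<Rightarrow> real \<Rightarrow> real \<Rightarrow> ('a \<Rightarrow> real) topology" where
  "weak_topology_Lp M q r = topology_generated_by
     {{f \<in> Lp_set M q. (\<integral>x. f x * g x \<partial>M) \<in> U} | g U. g \<in> Lp_set M r \<and> open U}"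

definition standing_assumption :: "'a measure \<Rightarrow> real \<Rightarrow> (('a \<Rightarrow> real) \<Rightarrow> real) \<Rightarrow> bool" where
  "standing_assumption M \<epsilon> \<rho> \<longleftrightarrow>
     dens_set M (2 + \<epsilon>) \<rho> \<subseteq> Lp_set M (1 + 2 / \<epsilon>) \<and>
     (\<exists>B. \<forall>f\<in>dens_set M (2 + \<epsilon>) \<rho>. (\<integral>x. \<bar>f x\<bar> powr (1 + 2 / \<epsilon>) \<partial>M) powr (1 / (1 + 2 / \<epsilon>)) \<le> B) \<and>
     compactin (weak_topology_Lp M (1 + 2 / \<epsilon>) (1 + \<epsilon> / 2)) (dens_set M (2 + \<epsilon>) \<rho>)"

end

theory Submission
  imports Defs
begin

text \<open>Write f = dP/dP_0 and F = E_P_0[f | C]. Stability yields Pbar in the representation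
  set with density f/F, and then
  E_Pbar[\<xi>] = E_P_0[(f/F) \<xi>] = E_P[\<xi>/F] = E_P[E_P[\<xi>|C]/F] = E_P_0[f E_P[\<xi>|C]/F] = E_P_0[E_P[\<xi>|C]],
  where the third and fifth steps use that 1/F is C-measurable. Properness makes f, hence F,
  positive P_0-a.s., which justifies the final cancellation of F.\<close>

lemma (in sigma_finite_measure)
  assumes "sigma_finite_measure N" "absolutely_continuous M N" "sets N = sets M"
    and "f \<in> borel_measurable M"
  shows integrable_density_of_iff:
      "integrable N f \<longleftrightarrow> integrable M (\<lambda>x. density_of M N x * f x)"
    and integral_density_of: "integral\<^sup>L N f = (\<integral>x. density_of M N x * f x \<partial>M)"
  unfolding density_of_def using RN_deriv_integrable[OF assms] RN_deriv_integral[OF assms] by auto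

lemma (in sigma_finite_measure) density_of_pos_AE:
  assumes N: "sigma_finite_measure N" "absolutely_continuous M N" "sets N = sets M"
    and "absolutely_continuous N M"
  shows "AE x in M. 0 < density_of M N x"
proof -
  have "AE x in density M (RN_deriv M N). 0 < RN_deriv M N x"
    by (subst AE_density) auto
  then have "AE x in N. 0 < RN_deriv M N x"
    by (simp only: density_RN_deriv[OF N(2,3)])
  then have "AE x in M. 0 < RN_deriv M N x"
    using absolutely_continuous_AE[OF N(3)[symmetric] assms(4)] by blast
  with RN_deriv_finite[OF N] show ?thesis
    unfolding density_of_def
    by eventually_elim (auto simp: enn2real_positive_iff less_top)
qed

lemma integral_density_ratio_cond_exp:
  assumes "finite_measure M" "finite_measure P" "subalgebra M C" "sets P = sets M"
    and "absolutely_continuous M P" "absolutely_continuous P M"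
    and \<xi>[measurable]: "\<xi> \<in> borel_measurable M"
    and int: "integrable M (\<lambda>x. density_of M P x / real_cond_exp M C (density_of M P) x * \<xi> x)"
  shows "(\<integral>x. density_of M P x / real_cond_exp M C (density_of M P) x * \<xi> x \<partial>M)
           = integral\<^sup>L M (real_cond_exp P C \<xi>)"
proof -
  interpret MC: finite_measure_subalgebra M C
    using assms(1,3) by (simp add: finite_measure_subalgebra_def finite_measure_subalgebra_axioms_def)
  have "subalgebra P C"
    using assms(3,4) sets_eq_imp_space_eq[OF assms(4)] by (simp add: subalgebra_def)
  then interpret PC: finite_measure_subalgebra P C
    using assms(2) by (simp add: finite_measure_subalgebra_def finite_measure_subalgebra_axioms_def)
  have sfP: "sigma_finite_measure P" by unfold_locales
  note dens = MC.integrable_density_of_iff[OF sfP assms(5,4)] MC.integral_density_of[OF sfP assms(5,4)]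
  define f where "f = density_of M P"
  define F where "F = real_cond_exp M C f"
  define h where "h = real_cond_exp P C \<xi>"
  have [measurable]: "f \<in> borel_measurable M" "F \<in> borel_measurable C" "h \<in> borel_measurable C"
    by (simp_all add: f_def density_of_def F_def h_def)
  have [measurable]: "F \<in> borel_measurable M" "h \<in> borel_measurable M"
    by (simp_all add: measurable_from_subalg[OF MC.subalg])
  have [measurable]: "\<xi> \<in> borel_measurable P"
    using \<xi> measurable_cong_sets[OF assms(4) refl] by blast
  have "integrable M f"
    using dens(1)[of "\<lambda>_. 1"] by (simp add: f_def)
  moreover have "AE x in M. 0 < f x"
    unfolding f_def by (rule MC.density_of_pos_AE[OF sfP assms(5,4,6)])
  ultimately have F_pos: "AE x in M. 0 < F x"
    unfolding F_def by (rule MC.real_cond_exp_gr_c)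
  have int_P: "integrable P (\<lambda>x. 1 / F x * \<xi> x)"
    using int dens(1)[of "\<lambda>x. 1 / F x * \<xi> x"] by (simp add: f_def F_def)
  have "(\<integral>x. f x / F x * \<xi> x \<partial>M) = integral\<^sup>L P (\<lambda>x. 1 / F x * \<xi> x)"
    using dens(2)[of "\<lambda>x. 1 / F x * \<xi> x"] by (simp add: f_def)
  also have "\<dots> = integral\<^sup>L P (\<lambda>x. 1 / F x * h x)"
    unfolding h_def by (rule PC.real_cond_exp_intg(2)[OF int_P, symmetric]) measurable
  also have "\<dots> = (\<integral>x. (1 / F x * h x) * f x \<partial>M)"
    using dens(2)[of "\<lambda>x. 1 / F x * h x"] by (simp add: f_def mult.commute)
  also have "\<dots> = (\<integral>x. (1 / F x * h x) * F x \<partial>M)"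
  proof -
    have "integrable P (\<lambda>x. 1 / F x * h x)"
      unfolding h_def by (rule PC.real_cond_exp_intg(1)[OF int_P]) measurable
    then have "integrable M (\<lambda>x. (1 / F x * h x) * f x)"
      using dens(1)[of "\<lambda>x. 1 / F x * h x"] by (simp add: f_def mult.commute)
    then show ?thesis
      unfolding F_def by (rule MC.real_cond_exp_intg(2)[symmetric]) measurable
  qed
  also have "\<dots> = integral\<^sup>L M h"
    using F_pos by (intro integral_cong_AE) auto
  finally show ?thesis by (simp add: f_def F_def h_def)
qed

theorem proposition1:
  fixes M C :: "'a measure" and \<epsilon> :: real and \<rho> :: "('a \<Rightarrow> real) \<Rightarrow> real"
    and P :: "'a measure" and \<xi> :: "'a \<Rightarrow> real"
  assumes "prob_space M" and "complete_measure M"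
    and "0 < \<epsilon>" and "\<epsilon> < 1"
    and "subalgebra M C"
    and "sublinear_operator M (2 + \<epsilon>) \<rho>"
    and "standing_assumption M \<epsilon> \<rho>"
    and "stable_op M C (2 + \<epsilon>) \<rho>"
    and "proper_op M (2 + \<epsilon>) \<rho>"
    and "P \<in> rep_set M (2 + \<epsilon>) \<rho>"
    and "\<xi> \<in> borel_measurable M" and "integrable M \<xi>"
    and "\<forall>Q\<in>rep_set M (2 + \<epsilon>) \<rho>. integrable Q \<xi>"
  shows "\<exists>Pbar\<in>rep_set M (2 + \<epsilon>) \<rho>.
           integral\<^sup>L Pbar \<xi> = integral\<^sup>L M (real_cond_exp P C \<xi>)"
proof -
  interpret M: prob_space M by fact
  note [measurable] = assms(11)
  define ratio where "ratio = (\<lambda>x. density_of M P x / real_cond_exp M C (density_of M P) x)"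
  obtain Q where Q: "Q \<in> rep_set M (2 + \<epsilon>) \<rho>" and ratio: "AE x in M. density_of M Q x = ratio x"
    using assms(8,10) unfolding stable_op_def dens_set_def ratio_def by blast
  have P: "prob_space P" "sets P = sets M" "absolutely_continuous M P" "absolutely_continuous P M"
    using assms(9,10) unfolding rep_set_def proper_op_def by auto
  have Q': "sigma_finite_measure Q" "absolutely_continuous M Q" "sets Q = sets M"
    using Q prob_space_imp_sigma_finite unfolding rep_set_def by auto
  have [measurable]: "ratio \<in> borel_measurable M" "density_of M Q \<in> borel_measurable M"
    by (simp_all add: ratio_def density_of_def measurable_from_subalg[OF assms(5)])
  have ratio_\<xi>: "AE x in M. density_of M Q x * \<xi> x = ratio x * \<xi> x"
    using ratio by eventually_elim simp
  have "integrable M (\<lambda>x. density_of M Q x * \<xi> x)"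
    using assms(13) Q M.integrable_density_of_iff[OF Q' assms(11)] by blast
  then have int: "integrable M (\<lambda>x. ratio x * \<xi> x)"
    by (rule integrable_cong_AE_imp[OF _ _ ratio_\<xi>]) measurable
  have "integral\<^sup>L Q \<xi> = (\<integral>x. density_of M Q x * \<xi> x \<partial>M)"
    by (rule M.integral_density_of[OF Q' assms(11)])
  also have "\<dots> = (\<integral>x. ratio x * \<xi> x \<partial>M)"
    by (rule integral_cong_AE[OF _ _ ratio_\<xi>]) (measurable, measurable)
  also have "\<dots> = integral\<^sup>L M (real_cond_exp P C \<xi>)"
    using int unfolding ratio_def
    by (rule integral_density_ratio_cond_exp[OF M.finite_measure_axioms
          prob_space.axioms(1)[OF P(1)] assms(5) P(2-4) assms(11)])
  finally show ?thesis using Q by auto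
qed

end
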